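(* Let $V$ be a finite nonempty set and $f:\{0,1\}^V\to\{0,1\}^V$. (1) If the asynchronous state graph $\Gamma(f)$ has at least two attractors, then $f$ has a 2-critical subnetwork. (2) If $f$ is non-expansive and $\Gamma(f)$ has a cyclic attractor, then $f$ has no fixed point, and hence $f$ has a 0-critical subnetwork.
   Context: $e_i$ is the point of $\{0,1\}^V$ whose only $1$ is at component $i$; $\oplus$ is componentwise addition mod 2; $d$ is the Hamming distance; $f$ is non-expansive if $d(f(x),f(y))\le d(x,y)$ for all $x,y$. $\Gamma(f)$ is the digraph on $\{0,1\}^V$ with an arc $x\to x\oplus e_i$ whenever $f_i(x)\neq x_i$. Attractors are the terminal strongly connected components of $\Gamma(f)$; an attractor is cyclic if it contains at least two points. For nonempty $I\subseteq V$ and $z\in\{0,1\}^{V\setminus I}$, the subnetwork of $f$ induced by $z$ is $h:\{0,1\}^I\to\{0,1\}^I$ with $h(x|_I)=f(x)|_I$ for all $x$ whose restriction to $V\setminus I$ is $z$ ($f$ is a subnetwork of itself); a strict subnetwork is one different from the network. A network is 2-critical if it has at least two fixed points and each of its strict subnetworks has at most one fixed point; 0-critical if it has no fixed point and each of its strict subnetworks has at least one fixed point. *)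

theory Defs
  imports Main
begin

text \<open>The finite nonempty set V is the finite type 'v. For I \<subseteq> V, a point of {0,1}^I is represented canonically as a map
  that is False outside I. A network on I is a map h on such points (values on
  non-canonical inputs are irrelevant).\<close>

definition pts :: "'v set \<Rightarrow> ('v \<Rightarrow> bool) set" where
  "pts I = {x. \<forall>i. i \<notin> I \<longrightarrow> \<not> x i}"

definition restr :: "'v set \<Rightarrow> ('v \<Rightarrow> bool) \<Rightarrow> ('v \<Rightarrow> bool)" where
  "restr J x = (\<lambda>i. i \<in> J \<and> x i)"

definition subnet :: "(('v \<Rightarrow> bool) \<Rightarrow> ('v \<Rightarrow> bool)) \<Rightarrow> 'v set \<Rightarrow> ('v \<Rightarrow> bool)
    \<Rightarrow> (('v \<Rightarrow> bool) \<Rightarrow> ('v \<Rightarrow> bool))" where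
  "subnet h J z = (\<lambda>y. restr J (h (\<lambda>i. if i \<in> J then y i else z i)))"

definition fixpts :: "'v set \<Rightarrow> (('v \<Rightarrow> bool) \<Rightarrow> ('v \<Rightarrow> bool)) \<Rightarrow> ('v \<Rightarrow> bool) set" where
  "fixpts I h = {x \<in> pts I. h x = x}"

definition two_critical :: "'v set \<Rightarrow> (('v \<Rightarrow> bool) \<Rightarrow> ('v \<Rightarrow> bool)) \<Rightarrow> bool" where
  "two_critical I h \<longleftrightarrow> card (fixpts I h) \<ge> 2 \<and>
     (\<forall>J z. J \<noteq> {} \<and> J \<subset> I \<and> z \<in> pts (I - J) \<longrightarrow> card (fixpts J (subnet h J z)) \<le> 1)"

definition zero_critical :: "'v set \<Rightarrow> (('v \<Rightarrow> bool) \<Rightarrow> ('v \<Rightarrow> bool)) \<Rightarrow> bool" where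
  "zero_critical I h \<longleftrightarrow> fixpts I h = {} \<and>
     (\<forall>J z. J \<noteq> {} \<and> J \<subset> I \<and> z \<in> pts (I - J) \<longrightarrow> fixpts J (subnet h J z) \<noteq> {})"

text \<open>Subnetworks of f :: {0,1}^V \<rightarrow> {0,1}^V (f itself is the case J = V).\<close>
definition has_subnet_with :: "(('v \<Rightarrow> bool) \<Rightarrow> ('v \<Rightarrow> bool))
    \<Rightarrow> ('v set \<Rightarrow> (('v \<Rightarrow> bool) \<Rightarrow> ('v \<Rightarrow> bool)) \<Rightarrow> bool) \<Rightarrow> bool" where
  "has_subnet_with f P \<longleftrightarrow> (\<exists>J z. J \<noteq> {} \<and> z \<in> pts (UNIV - J) \<and> P J (subnet f J z))"

definition flip :: "('v \<Rightarrow> bool) \<Rightarrow> 'v \<Rightarrow> ('v \<Rightarrow> bool)" where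
  "flip x i = x(i := \<not> x i)"

definition asg :: "(('v \<Rightarrow> bool) \<Rightarrow> ('v \<Rightarrow> bool)) \<Rightarrow> (('v \<Rightarrow> bool) \<times> ('v \<Rightarrow> bool)) set" where
  "asg f = {(x, flip x i) | x i. f x i \<noteq> x i}"

definition strongly_connected :: "('a \<times> 'a) set \<Rightarrow> 'a set \<Rightarrow> bool" where
  "strongly_connected R A \<longleftrightarrow> (\<forall>x\<in>A. \<forall>y\<in>A. (x, y) \<in> R\<^sup>*)"

definition scc :: "('a \<times> 'a) set \<Rightarrow> 'a set \<Rightarrow> bool" where
  "scc R A \<longleftrightarrow> A \<noteq> {} \<and> strongly_connected R A \<and>
     (\<forall>B. A \<subseteq> B \<and> strongly_connected R B \<longrightarrow> B = A)"

definition attractor :: "(('v \<Rightarrow> bool) \<Rightarrow> ('v \<Rightarrow> bool)) \<Rightarrow> ('v \<Rightarrow> bool) set \<Rightarrow> bool" where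
  "attractor f A \<longleftrightarrow> scc (asg f) A \<and> (\<forall>x y. x \<in> A \<and> (x, y) \<in> asg f \<longrightarrow> y \<in> A)"

definition cyclic_attractor :: "(('v \<Rightarrow> bool) \<Rightarrow> ('v \<Rightarrow> bool)) \<Rightarrow> ('v \<Rightarrow> bool) set \<Rightarrow> bool" where
  "cyclic_attractor f A \<longleftrightarrow> attractor f A \<and> (\<exists>x\<in>A. \<exists>y\<in>A. x \<noteq> y)"

definition hamming :: "('v::finite \<Rightarrow> bool) \<Rightarrow> ('v \<Rightarrow> bool) \<Rightarrow> nat" where
  "hamming x y = card {i. x i \<noteq> y i}"

definition non_expansive :: "(('v::finite \<Rightarrow> bool) \<Rightarrow> ('v \<Rightarrow> bool)) \<Rightarrow> bool" where
  "non_expansive f \<longleftrightarrow> (\<forall>x y. hamming (f x) (f y) \<le> hamming x y)"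

end

theory Submission
  imports Defs
begin

text \<open>Both parts rest on choosing a subnetwork that is minimal (in the size of its
  variable set) for some property, using that a subnetwork of a subnetwork is a
  subnetwork of f. For (1) the property is having two disjoint nonempty trap sets,
  e.g. two attractors. In a minimal such network, fixing any variable i to any value c
  cannot leave points of both traps, for the two slices would be disjoint traps of a
  smaller subnetwork; so on every variable the two traps take opposite constant
  values, i.e. they are distinct fixed points, and a strict subnetwork with two fixed
  points would again contradict minimality. For (2) the property is having no fixed
  point. If f is non-expansive with a fixed point p and a cyclic attractor A, then the
  point x of A closest to p cannot move towards p inside A, so f x agrees with x
  wherever x differs from p; non-expansiveness at the pair (x, p) forces f x = x, but a
  fixed point has no outgoing arcs and so cannot lie in a cyclic attractor.\<close>

definition trap :: "'v set \<Rightarrow> (('v \<Rightarrow> bool) \<Rightarrow> ('v \<Rightarrow> bool)) \<Rightarrow> ('v \<Rightarrow> bool) set \<Rightarrow> bool" where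
  "trap I h S \<longleftrightarrow> S \<subseteq> pts I \<and> (\<forall>x\<in>S. \<forall>i\<in>I. h x i \<noteq> x i \<longrightarrow> flip x i \<in> S)"

definition has_disjoint_traps :: "'v set \<Rightarrow> (('v \<Rightarrow> bool) \<Rightarrow> ('v \<Rightarrow> bool)) \<Rightarrow> bool" where
  "has_disjoint_traps I h \<longleftrightarrow>
     (\<exists>T1 T2. trap I h T1 \<and> trap I h T2 \<and> T1 \<noteq> {} \<and> T2 \<noteq> {} \<and> T1 \<inter> T2 = {})"

lemma pts_UNIV [simp]: "pts UNIV = UNIV"
  by (simp add: pts_def)

lemma subnet_UNIV [simp]: "subnet f UNIV z = f"
  by (simp add: subnet_def restr_def fun_eq_iff)

lemma subnet_subnet:
  assumes "J \<subseteq> I"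
  shows "subnet (subnet f I z) J z' = subnet f J (\<lambda>k. if k \<in> I then z' k else z k)"
proof -
  have "(\<lambda>k. if k \<in> I then if k \<in> J then y k else z' k else z k)
      = (\<lambda>k. if k \<in> J then y k else if k \<in> I then z' k else z k)" for y
    using assms by (auto simp: fun_eq_iff)
  then show ?thesis
    using assms by (auto simp: subnet_def restr_def fun_eq_iff)
qed

lemma minimal_subnet:
  fixes f :: "('v::finite \<Rightarrow> bool) \<Rightarrow> ('v \<Rightarrow> bool)"
  assumes "P UNIV f"
  obtains I z where "P I (subnet f I z)" "z \<in> pts (UNIV - I)"
    and "\<And>J z'. J \<subset> I \<Longrightarrow> z' \<in> pts (I - J) \<Longrightarrow> \<not> P J (subnet (subnet f I z) J z')"
proof -
  define Q where "Q = (\<lambda>(I, z). z \<in> pts (UNIV - I) \<and> P I (subnet f I z))"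
  have "Q (UNIV, \<lambda>_. False)"
    using assms by (simp add: Q_def pts_def)
  then obtain I z where Q: "Q (I, z)" and least: "\<And>J z'. Q (J, z') \<Longrightarrow> card I \<le> card J"
    using ex_has_least_nat[of Q _ "\<lambda>(I, z). card I"] by fastforce
  have minimal: "\<not> P J (subnet (subnet f I z) J z')"
    if J: "J \<subset> I" and z': "z' \<in> pts (I - J)" for J z'
  proof
    define z'' where "z'' = (\<lambda>k. if k \<in> I then z' k else z k)"
    assume "P J (subnet (subnet f I z) J z')"
    moreover have "z'' \<in> pts (UNIV - J)"
      using Q J z' by (auto simp: Q_def z''_def pts_def)
    ultimately have "Q (J, z'')"
      using J by (simp add: Q_def z''_def subnet_subnet)
    moreover have "card J < card I"
      using J by (simp add: psubset_card_mono)
    ultimately show False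
      using least by fastforce
  qed
  from Q have "P I (subnet f I z)" "z \<in> pts (UNIV - I)"
    by (simp_all add: Q_def)
  then show thesis
    using minimal by (rule that)
qed

lemma fixpts_imp_trap:
  assumes "a \<in> fixpts I h"
  shows "trap I h {a}"
  using assms by (auto simp: trap_def fixpts_def)

lemma trap_singleton_imp_fixpts:
  assumes "trap I (subnet h I z) {a}"
  shows "a \<in> fixpts I (subnet h I z)"
proof -
  have a: "a \<in> pts I"
    using assms by (simp add: trap_def)
  have "subnet h I z a i = a i" for i
  proof (cases "i \<in> I")
    case True
    have "flip a i \<noteq> a"
      by (simp add: flip_def fun_eq_iff)
    with assms True show ?thesis
      by (auto simp: trap_def)
  next
    case False
    with a show ?thesis
      by (simp add: subnet_def restr_def pts_def)
  qed
  with a show ?thesis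
    by (simp add: fixpts_def fun_eq_iff)
qed

lemma trap_slice:
  assumes T: "trap I h T" and i: "i \<in> I"
  shows "trap (I - {i}) (subnet h (I - {i}) (\<lambda>k. k = i \<and> c)) {y \<in> pts (I - {i}). y(i := c) \<in> T}"
  unfolding trap_def
proof (intro conjI ballI impI)
  fix y j
  assume y: "y \<in> {y \<in> pts (I - {i}). y(i := c) \<in> T}" and j: "j \<in> I - {i}"
    and moves: "subnet h (I - {i}) (\<lambda>k. k = i \<and> c) y j \<noteq> y j"
  have "(\<lambda>k. if k \<in> I - {i} then y k else k = i \<and> c) = y(i := c)"
    using y by (auto simp: pts_def fun_eq_iff)
  then have "h (y(i := c)) j \<noteq> (y(i := c)) j"
    using j moves by (simp add: subnet_def restr_def)
  then have "flip (y(i := c)) j \<in> T"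
    using T y j by (simp add: trap_def)
  moreover have "flip (y(i := c)) j = (flip y j)(i := c)"
    using j by (auto simp: flip_def fun_eq_iff)
  moreover have "flip y j \<in> pts (I - {i})"
    using y j by (auto simp: pts_def flip_def)
  ultimately show "flip y j \<in> {y \<in> pts (I - {i}). y(i := c) \<in> T}"
    by simp
qed auto

lemma has_disjoint_traps_nonempty:
  assumes "has_disjoint_traps I h"
  shows "I \<noteq> {}"
proof
  assume "I = {}"
  then have "pts I = {\<lambda>_. False}"
    by (auto simp: pts_def)
  with assms show False
    by (auto simp: has_disjoint_traps_def trap_def)
qed

lemma minimal_disjoint_traps_separated:
  assumes T1: "trap I h T1" and T2: "trap I h T2" and disj: "T1 \<inter> T2 = {}"
    and minimal: "\<And>J z. J \<subset> I \<Longrightarrow> z \<in> pts (I - J) \<Longrightarrow> \<not> has_disjoint_traps J (subnet h J z)"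
    and i: "i \<in> I" and x1: "x1 \<in> T1" and x2: "x2 \<in> T2"
  shows "x1 i \<noteq> x2 i"
proof
  assume same: "x1 i = x2 i"
  define c where "c = x1 i"
  define slice where "slice T = {y \<in> pts (I - {i}). y(i := c) \<in> T}" for T
  have "x1(i := False, i := c) = x1" "x2(i := False, i := c) = x2"
    using same by (auto simp: c_def fun_eq_iff)
  then have "x1(i := False) \<in> slice T1" "x2(i := False) \<in> slice T2"
    using T1 T2 x1 x2 by (auto simp: slice_def trap_def pts_def)
  moreover have "slice T1 \<inter> slice T2 = {}"
    using disj by (auto simp: slice_def)
  ultimately have "has_disjoint_traps (I - {i}) (subnet h (I - {i}) (\<lambda>k. k = i \<and> c))"
    unfolding has_disjoint_traps_def slice_def
    using trap_slice[OF T1 i] trap_slice[OF T2 i] by blast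
  moreover have "(\<lambda>k. k = i \<and> c) \<in> pts (I - (I - {i}))"
    using i by (simp add: pts_def)
  ultimately show False
    using minimal i by blast
qed

lemma pts_opposite_singleton:
  assumes T: "T \<subseteq> pts I"
    and opposite: "\<And>i x. i \<in> I \<Longrightarrow> x \<in> T \<Longrightarrow> x i \<noteq> y i"
    and x: "x \<in> T"
  shows "T = {x}"
proof -
  have "x' = x" if "x' \<in> T" for x'
    using opposite[OF _ x] opposite[OF _ that] T x that by (auto simp: pts_def fun_eq_iff)
  with x show ?thesis
    by blast
qed

lemma two_critical_if_minimal:
  fixes h :: "('v::finite \<Rightarrow> bool) \<Rightarrow> ('v \<Rightarrow> bool)"
  assumes traps: "has_disjoint_traps I (subnet h I z)"
    and minimal: "\<And>J z'. J \<subset> I \<Longrightarrow> z' \<in> pts (I - J)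
                    \<Longrightarrow> \<not> has_disjoint_traps J (subnet (subnet h I z) J z')"
  shows "two_critical I (subnet h I z)"
proof -
  obtain T1 T2 a b where T1: "trap I (subnet h I z) T1" and T2: "trap I (subnet h I z) T2"
    and disj: "T1 \<inter> T2 = {}" and a: "a \<in> T1" and b: "b \<in> T2"
    using traps by (auto simp: has_disjoint_traps_def)
  have separated: "x1 i \<noteq> x2 i" if "i \<in> I" "x1 \<in> T1" "x2 \<in> T2" for i x1 x2
    using minimal_disjoint_traps_separated[OF T1 T2 disj minimal] that by blast
  have "T1 \<subseteq> pts I" "T2 \<subseteq> pts I"
    using T1 T2 by (simp_all add: trap_def)
  then have "T1 = {a}" "T2 = {b}"
    using a b separated pts_opposite_singleton[where y = b] pts_opposite_singleton[where y = a]
    by metis+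
  then have "{a, b} \<subseteq> fixpts I (subnet h I z)"
    using T1 T2 trap_singleton_imp_fixpts by blast
  moreover have "a \<noteq> b"
    using a b disj by blast
  ultimately have "card (fixpts I (subnet h I z)) \<ge> 2"
    by (metis card_2_iff card_mono finite)
  moreover have "card (fixpts J (subnet (subnet h I z) J z')) \<le> 1"
    if "J \<subset> I" "z' \<in> pts (I - J)" for J z'
  proof (rule ccontr)
    assume "\<not> ?thesis"
    then obtain p q where "p \<in> fixpts J (subnet (subnet h I z) J z')"
      "q \<in> fixpts J (subnet (subnet h I z) J z')" "p \<noteq> q"
      by (metis One_nat_def card_le_Suc0_iff_eq finite)
    then have "has_disjoint_traps J (subnet (subnet h I z) J z')"
      unfolding has_disjoint_traps_def by (blast intro: fixpts_imp_trap)
    with minimal that show False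
      by blast
  qed
  ultimately show ?thesis
    by (simp add: two_critical_def)
qed

lemma has_disjoint_traps_imp_two_critical_subnet:
  fixes f :: "('v::finite \<Rightarrow> bool) \<Rightarrow> ('v \<Rightarrow> bool)"
  assumes "has_disjoint_traps UNIV f"
  shows "has_subnet_with f two_critical"
proof -
  obtain I z where traps: "has_disjoint_traps I (subnet f I z)" and z: "z \<in> pts (UNIV - I)"
    and minimal: "\<And>J z'. J \<subset> I \<Longrightarrow> z' \<in> pts (I - J) \<Longrightarrow>
           \<not> has_disjoint_traps J (subnet (subnet f I z) J z')"
    by (rule minimal_subnet[of has_disjoint_traps, OF assms]) (rule that)
  have "two_critical I (subnet f I z)"
    using traps minimal by (rule two_critical_if_minimal)
  moreover have "I \<noteq> {}"
    using traps by (rule has_disjoint_traps_nonempty)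
  ultimately show ?thesis
    unfolding has_subnet_with_def using z by blast
qed

lemma no_fixpts_imp_zero_critical_subnet:
  fixes f :: "('v::finite \<Rightarrow> bool) \<Rightarrow> ('v \<Rightarrow> bool)"
  assumes "\<forall>x. f x \<noteq> x"
  shows "has_subnet_with f zero_critical"
proof -
  have "fixpts UNIV f = {}"
    using assms by (simp add: fixpts_def)
  then obtain I z where none: "fixpts I (subnet f I z) = {}" and z: "z \<in> pts (UNIV - I)"
    and minimal: "\<And>J z'. J \<subset> I \<Longrightarrow> z' \<in> pts (I - J) \<Longrightarrow>
           fixpts J (subnet (subnet f I z) J z') \<noteq> {}"
    by (rule minimal_subnet[where P = "\<lambda>I h. fixpts I h = {}"]) (rule that)
  then have "zero_critical I (subnet f I z)"
    by (simp add: zero_critical_def)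
  moreover have "I \<noteq> {}"
  proof
    assume "I = {}"
    then have "(\<lambda>_. False) \<in> fixpts I (subnet f I z)"
      by (simp add: fixpts_def pts_def subnet_def restr_def fun_eq_iff)
    with none show False
      by simp
  qed
  ultimately show ?thesis
    unfolding has_subnet_with_def using z by blast
qed

lemma attractor_trap:
  assumes "attractor f A"
  shows "trap UNIV f A"
  using assms by (auto simp: trap_def attractor_def asg_def)

lemma attractor_eq_if_common_point:
  assumes A: "attractor f A" and B: "attractor f B" and x: "x \<in> A" "x \<in> B"
  shows "A = B"
proof -
  have scA: "strongly_connected (asg f) A" and scB: "strongly_connected (asg f) B"
    using A B by (auto simp: attractor_def scc_def)
  have "(u, v) \<in> (asg f)\<^sup>*" if "u \<in> A \<union> B" "v \<in> A \<union> B" for u v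
  proof -
    have "(u, x) \<in> (asg f)\<^sup>*" "(x, v) \<in> (asg f)\<^sup>*"
      using that scA scB x unfolding strongly_connected_def by blast+
    then show ?thesis
      by (rule rtrancl_trans)
  qed
  then have "strongly_connected (asg f) (A \<union> B)"
    by (simp add: strongly_connected_def)
  then have "A \<union> B = A" "A \<union> B = B"
    using A B by (auto simp: attractor_def scc_def)
  then show ?thesis
    by simp
qed

lemma two_attractors_imp_disjoint_traps:
  assumes "attractor f A" "attractor f B" "A \<noteq> B"
  shows "has_disjoint_traps UNIV f"
proof -
  have "A \<noteq> {}" "B \<noteq> {}"
    using assms by (auto simp: attractor_def scc_def)
  moreover have "A \<inter> B = {}"
    using assms attractor_eq_if_common_point by blast
  ultimately show ?thesis
    unfolding has_disjoint_traps_def using assms attractor_trap by blast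
qed

lemma reachable_from_fixed_point:
  assumes "f x = x" "(x, y) \<in> (asg f)\<^sup>*"
  shows "y = x"
  using assms(2) by induction (use assms(1) in \<open>auto simp: asg_def\<close>)

lemma cyclic_attractor_not_fixed:
  assumes A: "cyclic_attractor f A" and x: "x \<in> A"
  shows "f x \<noteq> x"
proof
  assume "f x = x"
  moreover obtain u v where "u \<in> A" "v \<in> A" "u \<noteq> v"
    using A by (auto simp: cyclic_attractor_def)
  moreover have "strongly_connected (asg f) A"
    using A by (auto simp: cyclic_attractor_def attractor_def scc_def)
  ultimately show False
    using x reachable_from_fixed_point unfolding strongly_connected_def by metis
qed

lemma non_expansive_fixed_if_stable_where_differs:
  fixes f :: "('v::finite \<Rightarrow> bool) \<Rightarrow> ('v \<Rightarrow> bool)"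
  assumes ne: "non_expansive f" and p: "f p = p"
    and stable: "\<And>i. x i \<noteq> p i \<Longrightarrow> f x i = x i"
  shows "f x = x"
proof -
  define D where "D = {i. x i \<noteq> p i}"
  have "card {i. f x i \<noteq> p i} = hamming (f x) (f p)"
    by (simp add: hamming_def p)
  also have "\<dots> \<le> hamming x p"
    using ne by (simp add: non_expansive_def)
  also have "\<dots> = card D"
    by (simp add: hamming_def D_def)
  finally have "card {i. f x i \<noteq> p i} \<le> card D" .
  moreover have "D \<subseteq> {i. f x i \<noteq> p i}"
    using stable by (auto simp: D_def)
  ultimately have "D = {i. f x i \<noteq> p i}"
    by (intro card_seteq) simp_all
  then show ?thesis
    using stable by (auto simp: D_def fun_eq_iff)
qed

lemma closest_point_of_attractor_stable:
  assumes A: "attractor f A" and x: "x \<in> A"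
    and closest: "\<And>y. y \<in> A \<Longrightarrow> hamming x p \<le> hamming y p"
    and i: "x i \<noteq> p i"
  shows "f x i = x i"
proof (rule ccontr)
  assume "f x i \<noteq> x i"
  then have "flip x i \<in> A"
    using A x by (auto simp: attractor_def asg_def)
  then have le: "hamming x p \<le> hamming (flip x i) p"
    by (rule closest)
  have "{k. flip x i k \<noteq> p k} = {k. x k \<noteq> p k} - {i}"
    using i by (auto simp: flip_def)
  then have "hamming (flip x i) p = card ({k. x k \<noteq> p k} - {i})"
    by (simp only: hamming_def)
  also have "\<dots> < hamming x p"
    unfolding hamming_def using i by (intro card_Diff1_less) simp_all
  finally show False
    using le by simp
qed

lemma non_expansive_cyclic_attractor_no_fixpoint:
  fixes f :: "('v::finite \<Rightarrow> bool) \<Rightarrow> ('v \<Rightarrow> bool)"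
  assumes ne: "non_expansive f" and A: "cyclic_attractor f A"
  shows "f p \<noteq> p"
proof
  assume p: "f p = p"
  obtain a where "a \<in> A"
    using A by (auto simp: cyclic_attractor_def)
  then obtain x where x: "x \<in> A" and closest: "\<And>y. y \<in> A \<Longrightarrow> hamming x p \<le> hamming y p"
    using ex_has_least_nat[of "\<lambda>y. y \<in> A" a "\<lambda>y. hamming y p"] by blast
  have "attractor f A"
    using A by (simp add: cyclic_attractor_def)
  then have "f x i = x i" if "x i \<noteq> p i" for i
    using x closest that by (rule closest_point_of_attractor_stable)
  then have "f x = x"
    by (rule non_expansive_fixed_if_stable_where_differs[OF ne p])
  with cyclic_attractor_not_fixed[OF A x] show False
    by simp
qed

theorem proposition2:
  fixes f :: "('v::finite \<Rightarrow> bool) \<Rightarrow> ('v \<Rightarrow> bool)"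
  shows "((\<exists>A B. attractor f A \<and> attractor f B \<and> A \<noteq> B) \<longrightarrow> has_subnet_with f two_critical)
       \<and> ((non_expansive f \<and> (\<exists>A. cyclic_attractor f A)) \<longrightarrow>
            (\<forall>x. f x \<noteq> x) \<and> has_subnet_with f zero_critical)"
proof (intro conjI impI)
  assume "\<exists>A B. attractor f A \<and> attractor f B \<and> A \<noteq> B"
  then show "has_subnet_with f two_critical"
    by (metis two_attractors_imp_disjoint_traps has_disjoint_traps_imp_two_critical_subnet)
next
  assume "non_expansive f \<and> (\<exists>A. cyclic_attractor f A)"
  then show "\<forall>x. f x \<noteq> x"
    using non_expansive_cyclic_attractor_no_fixpoint by blast
  then show "has_subnet_with f zero_critical"
    by (rule no_fixpts_imp_zero_critical_subnet)
qed

end
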